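(* Let $(X_j)_{j\in\mathbb{Z}^2}$ be i.i.d. Poisson random variables with mean $\lambda>0$, and let $N_n$ be the greedy lattice animal weight of size $n$. There is a constant $\rho>0$ (not depending on $\lambda$) such that for all $y\ge y_0:=(e^3\lambda)\vee\rho$ and all $n\in\mathbb{N}$, $$\mathbb{P}(N_n>yn)\le e^{-yn}.$$
   Context: A lattice animal is a connected subset of $\mathbb{Z}^2$ (nearest-neighbor connectivity) containing the origin; $A(n)$ is the set of lattice animals with $n$ sites. Given $X:\mathbb{Z}^2\to\mathbb{R}$, the weight of $\mathcal{A}\in A(n)$ is $\sum_{k\in\mathcal{A}}X_k$, and $N_n=\max_{\mathcal{A}\in A(n)}\sum_{k\in\mathcal{A}}X_k$. *)

theory Defs
  imports "HOL-Probability.Probability"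
begin

definition lattice_adj :: "int \<times> int \<Rightarrow> int \<times> int \<Rightarrow> bool" where
  "lattice_adj p q \<longleftrightarrow> \<bar>fst p - fst q\<bar> + \<bar>snd p - snd q\<bar> = 1"

definition lattice_connected :: "(int \<times> int) set \<Rightarrow> bool" where
  "lattice_connected A \<longleftrightarrow>
     (\<forall>p\<in>A. \<forall>q\<in>A. (p, q) \<in> {(u, v). u \<in> A \<and> v \<in> A \<and> lattice_adj u v}\<^sup>*)"

definition lattice_animals :: "nat \<Rightarrow> (int \<times> int) set set" where
  "lattice_animals n = {A. finite A \<and> card A = n \<and> (0, 0) \<in> A \<and> lattice_connected A}"

definition greedy_animal :: "((int \<times> int) \<Rightarrow> real) \<Rightarrow> nat \<Rightarrow> real" where
  "greedy_animal X n = Max ((\<lambda>A. \<Sum>k\<in>A. X k) ` lattice_animals n)"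

end

theory Submission
  imports Defs
begin

(*
  A lattice animal with n sites is the set of sites visited by a walk of length 2(n - 1) from
  the origin (a depth-first traversal of a spanning tree), so there are at most 16^(n - 1) of
  them.  For a fixed animal A, the Chernoff bound with tilt 3 and the Poisson moment generating
  function E exp (3 X) = exp (lam (e^3 - 1)) give P(sum over A of X >= y n) <=
  exp (n lam (e^3 - 1) - 3 y n).  A union bound over all animals then yields exp (- y n) as soon
  as y >= 4, which absorbs 16^n <= e^(4 n), and y >= e^3 lam.
*)

definition lattice_units :: "(int \<times> int) set" where
  "lattice_units = {(1, 0), (-1, 0), (0, 1), (0, -1)}"

lemma uminus_lattice_units: "d \<in> lattice_units \<Longrightarrow> - d \<in> lattice_units"
  by (auto simp: lattice_units_def)

lemma finite_lattice_units: "finite lattice_units"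
  and card_lattice_units: "card lattice_units = 4"
  by (simp_all add: lattice_units_def)

lemma lattice_adj_iff_diff: "lattice_adj u v \<longleftrightarrow> v - u \<in> lattice_units"
proof -
  have "\<bar>a\<bar> + \<bar>b\<bar> = 1 \<longleftrightarrow> (a, b) \<in> lattice_units" for a b :: int
    by (auto simp: lattice_units_def)
  moreover have "v - u = (fst v - fst u, snd v - snd u)"
    by (simp add: prod_eq_iff)
  ultimately show ?thesis
    by (simp add: lattice_adj_def abs_minus_commute[of "fst u"] abs_minus_commute[of "snd u"])
qed

lemma lattice_adj_sym: "lattice_adj u v \<Longrightarrow> lattice_adj v u"
  by (simp add: lattice_adj_def abs_minus_commute)

definition lattice_edges :: "(int \<times> int) set \<Rightarrow> ((int \<times> int) \<times> (int \<times> int)) set" where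
  "lattice_edges A = {(u, v). u \<in> A \<and> v \<in> A \<and> lattice_adj u v}"

lemma lattice_connected_iff_edges:
  "lattice_connected A \<longleftrightarrow> (\<forall>p\<in>A. \<forall>q\<in>A. (p, q) \<in> (lattice_edges A)\<^sup>*)"
  by (simp add: lattice_connected_def lattice_edges_def)

lemma lattice_connectedI:
  assumes "\<And>q. q \<in> A \<Longrightarrow> (p, q) \<in> (lattice_edges A)\<^sup>*"
  shows "lattice_connected A"
proof -
  have "sym ((lattice_edges A)\<^sup>*)"
    by (intro sym_rtrancl) (auto simp: sym_def lattice_edges_def lattice_adj_sym)
  then show ?thesis
    using assms unfolding lattice_connected_iff_edges
    by (meson rtrancl_trans symD)
qed

lemma rtrancl_leaves_set:
  assumes "(p, q) \<in> R\<^sup>*" "p \<in> B" "q \<notin> B"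
  shows "\<exists>u\<in>B. \<exists>v. v \<notin> B \<and> (u, v) \<in> R"
  using assms by (induction rule: rtrancl_induct) auto

fun walk_sites :: "int \<times> int \<Rightarrow> (int \<times> int) list \<Rightarrow> (int \<times> int) set" where
  "walk_sites p [] = {p}"
| "walk_sites p (d # ds) = insert p (walk_sites (p + d) ds)"

lemma start_in_walk_sites: "p \<in> walk_sites p ds"
  by (cases ds) auto

lemma finite_walk_sites: "finite (walk_sites p ds)"
  by (induction ds arbitrary: p) auto

lemma walk_sites_append:
  "walk_sites p (xs @ ys) = walk_sites p xs \<union> walk_sites (p + sum_list xs) ys"
  by (induction xs arbitrary: p) (auto simp: start_in_walk_sites add.assoc)

lemma walk_sites_split:
  "u \<in> walk_sites p ds \<Longrightarrow> \<exists>xs ys. ds = xs @ ys \<and> p + sum_list xs = u"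
proof (induction ds arbitrary: p)
  case (Cons d ds)
  show ?case
  proof (cases "u = p")
    case True
    then show ?thesis by (intro exI[of _ "[]"] exI[of _ "d # ds"]) auto
  next
    case False
    with Cons.prems have "u \<in> walk_sites (p + d) ds"
      by simp
    then obtain xs ys where "ds = xs @ ys" "p + d + sum_list xs = u"
      using Cons.IH by blast
    then show ?thesis by (intro exI[of _ "d # xs"] exI[of _ ys]) (auto simp: add.assoc)
  qed
qed simp

lemma walk_sites_detour:
  assumes "u \<in> walk_sites p ds" "d \<in> lattice_units" "ds \<in> lists lattice_units"
  shows "\<exists>ds'\<in>lists lattice_units. length ds' = length ds + 2 \<and>
           walk_sites p ds' = insert (u + d) (walk_sites p ds)"
proof -
  obtain xs ys where ds: "ds = xs @ ys" and u: "p + sum_list xs = u"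
    using walk_sites_split[OF assms(1)] by blast
  have "walk_sites p (xs @ [d, -d] @ ys) = walk_sites p xs \<union> insert u (insert (u + d) (walk_sites u ys))"
    by (simp add: walk_sites_append u)
  also have "\<dots> = insert (u + d) (walk_sites p ds)"
    using start_in_walk_sites[of u ys] by (auto simp: ds walk_sites_append u)
  finally show ?thesis
    using assms(2,3) uminus_lattice_units[OF assms(2)] ds
    by (intro bexI[of _ "xs @ [d, -d] @ ys"]) auto
qed

lemma lattice_connected_walk_exhausts:
  assumes A: "finite A" "lattice_connected A" "p \<in> A" and k: "1 \<le> k" "k \<le> card A"
  shows "\<exists>ds\<in>lists lattice_units. length ds = 2 * (k - 1) \<and>
           walk_sites p ds \<subseteq> A \<and> card (walk_sites p ds) = k"
  using k
proof (induction k rule: dec_induct)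
  case base
  then show ?case using A(3) by (intro bexI[of _ "[]"]) auto
next
  case (step k)
  then obtain ds where ds: "ds \<in> lists lattice_units" "length ds = 2 * (k - 1)"
      "walk_sites p ds \<subseteq> A" "card (walk_sites p ds) = k"
    by auto
  have "walk_sites p ds \<noteq> A"
    using ds(4) step.prems by auto
  then obtain w where w: "w \<in> A" "w \<notin> walk_sites p ds"
    using ds(3) by blast
  have "(p, w) \<in> (lattice_edges A)\<^sup>*"
    using A w(1) by (simp add: lattice_connected_iff_edges)
  then obtain u v where uv: "u \<in> walk_sites p ds" "v \<notin> walk_sites p ds" "(u, v) \<in> lattice_edges A"
    using rtrancl_leaves_set[OF _ start_in_walk_sites w(2)] by blast
  then have "v - u \<in> lattice_units" "v \<in> A"
    by (auto simp: lattice_edges_def lattice_adj_iff_diff)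
  then obtain ds' where "ds' \<in> lists lattice_units" "length ds' = length ds + 2"
      "walk_sites p ds' = insert v (walk_sites p ds)"
    using walk_sites_detour[OF uv(1) _ ds(1)] by fastforce
  then show ?case
    using ds uv(2) step.hyps \<open>v \<in> A\<close> finite_walk_sites
    by (intro bexI[of _ ds']) auto
qed

lemma lattice_animals_subset_walks:
  "lattice_animals n \<subseteq> walk_sites (0, 0) ` {ds. set ds \<subseteq> lattice_units \<and> length ds = 2 * (n - 1)}"
proof
  fix A assume "A \<in> lattice_animals n"
  then have A: "finite A" "card A = n" "(0, 0) \<in> A" "lattice_connected A"
    by (auto simp: lattice_animals_def)
  then have "1 \<le> n"
    by (auto simp: Suc_le_eq card_gt_0_iff)
  then obtain ds where "ds \<in> lists lattice_units" "length ds = 2 * (n - 1)"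
      "walk_sites (0, 0) ds \<subseteq> A" "card (walk_sites (0, 0) ds) = n"
    using lattice_connected_walk_exhausts[OF A(1,4,3)] A(2) by blast
  moreover from this have "walk_sites (0, 0) ds = A"
    using A(1,2) by (simp add: card_subset_eq)
  ultimately show "A \<in> walk_sites (0, 0) ` {ds. set ds \<subseteq> lattice_units \<and> length ds = 2 * (n - 1)}"
    by blast
qed

lemma finite_lattice_animals: "finite (lattice_animals n)"
  by (rule finite_subset[OF lattice_animals_subset_walks])
     (simp add: finite_lists_length_eq finite_lattice_units)

lemma card_lattice_animals_le: "card (lattice_animals n) \<le> 16 ^ (n - 1)"
proof -
  let ?W = "{ds. set ds \<subseteq> lattice_units \<and> length ds = 2 * (n - 1)}"
  have "finite ?W"
    by (simp add: finite_lists_length_eq finite_lattice_units)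
  then have "card (lattice_animals n) \<le> card (walk_sites (0, 0) ` ?W)"
    by (intro card_mono lattice_animals_subset_walks finite_imageI)
  also have "\<dots> \<le> card ?W"
    by (rule card_image_le[OF \<open>finite ?W\<close>])
  also have "\<dots> = 16 ^ (n - 1)"
    by (simp add: card_lists_length_eq[OF finite_lattice_units] card_lattice_units power_mult)
  finally show ?thesis .
qed

lemma lattice_animals_nonempty:
  assumes "1 \<le> n"
  shows "lattice_animals n \<noteq> {}"
proof -
  define S where "S = (\<lambda>i. (int i, 0 :: int)) ` {..<n}"
  have "((0, 0), (int j, 0)) \<in> (lattice_edges S)\<^sup>*" if "j < n" for j
    using that
  proof (induction j)
    case (Suc j)
    have "(int j, 0) \<in> S"
      using Suc.prems by (auto simp: S_def)
    moreover have "(int (Suc j), 0) \<in> S"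
      unfolding S_def by (rule image_eqI[where x = "Suc j"]) (use Suc.prems in auto)
    ultimately have "((int j, 0), (int (Suc j), 0)) \<in> lattice_edges S"
      by (simp add: lattice_edges_def lattice_adj_def)
    with Suc show ?case by (meson Suc_lessD rtrancl_into_rtrancl)
  qed simp
  then have "lattice_connected S"
    by (intro lattice_connectedI[of S "(0, 0)"]) (auto simp: S_def)
  moreover have "card S = n"
    by (simp add: S_def card_image inj_on_def)
  moreover have "(0, 0) \<in> S"
    using assms by (force simp: S_def)
  ultimately have "S \<in> lattice_animals n"
    by (simp add: lattice_animals_def S_def)
  then show ?thesis by blast
qed

lemma nn_integral_exp_poisson:
  assumes "lam > 0"
  shows "(\<integral>\<^sup>+x. ennreal (exp (t * real x)) \<partial>measure_pmf (poisson_pmf lam)) = ennreal (exp (lam * (exp t - 1)))"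
proof -
  have sums: "(\<lambda>x. exp (- lam) * ((lam * exp t) ^ x / fact x)) sums (exp (- lam) * exp (lam * exp t))"
    using exp_converges[of "lam * exp t"] by (intro sums_mult) (simp add: divide_inverse mult.commute)
  have "ennreal (pmf (poisson_pmf lam) x) * ennreal (exp (t * real x))
      = ennreal (exp (- lam) * ((lam * exp t) ^ x / fact x))" for x :: nat
  proof -
    have "exp (t * real x) = exp t ^ x"
      by (simp add: exp_of_nat_mult[symmetric] mult.commute)
    then show ?thesis
      using assms by (simp add: ennreal_mult'[symmetric] power_mult_distrib field_simps)
  qed
  then have "(\<integral>\<^sup>+x. ennreal (exp (t * real x)) \<partial>measure_pmf (poisson_pmf lam))
      = (\<Sum>x. ennreal (exp (- lam) * ((lam * exp t) ^ x / fact x)))"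
    by (simp add: nn_integral_measure_pmf nn_integral_count_space_nat)
  also have "\<dots> = ennreal (\<Sum>x. exp (- lam) * ((lam * exp t) ^ x / fact x))"
    by (rule suminf_ennreal2) (use assms sums in \<open>auto simp: sums_iff\<close>)
  also have "(\<Sum>x. exp (- lam) * ((lam * exp t) ^ x / fact x)) = exp (- lam) * exp (lam * exp t)"
    using sums by (simp add: sums_iff)
  also have "exp (- lam) * exp (lam * exp t) = exp (lam * (exp t - 1))"
    by (simp add: exp_add[symmetric] algebra_simps)
  finally show ?thesis .
qed

lemma (in prob_space) Chernoff_sum_indep_poisson:
  fixes X :: "'i \<Rightarrow> 'a \<Rightarrow> nat" and lam t a :: real
  assumes indep: "indep_vars (\<lambda>_. count_space UNIV) X I"
    and poisson: "\<And>i. i \<in> I \<Longrightarrow> distr M (count_space UNIV) (X i) = measure_pmf (poisson_pmf lam)"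
    and "lam > 0" "t > 0" "finite A" "A \<subseteq> I"
  shows "prob {\<omega> \<in> space M. a \<le> (\<Sum>i\<in>A. real (X i \<omega>))} \<le> exp (card A * lam * (exp t - 1) - t * a)"
proof -
  have X_measurable: "X i \<in> measurable M (count_space UNIV)" if "i \<in> I" for i
    using indep that by (auto simp: indep_vars_def)
  have [measurable]: "(\<lambda>\<omega>. \<Sum>i\<in>A. real (X i \<omega>)) \<in> borel_measurable M"
    using \<open>A \<subseteq> I\<close> X_measurable by (intro borel_measurable_sum) auto
  have moment: "(\<integral>\<^sup>+\<omega>. ennreal (exp (t * real (X i \<omega>))) \<partial>M) = ennreal (exp (lam * (exp t - 1)))"
    if "i \<in> I" for i
  proof -
    have "(\<integral>\<^sup>+\<omega>. ennreal (exp (t * real (X i \<omega>))) \<partial>M)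
        = (\<integral>\<^sup>+x. ennreal (exp (t * real x)) \<partial>distr M (count_space UNIV) (X i))"
      using that X_measurable by (simp add: nn_integral_distr)
    then show ?thesis
      using poisson[OF that] nn_integral_exp_poisson[OF \<open>lam > 0\<close>] by simp
  qed
  have "emeasure M {\<omega> \<in> space M. a \<le> (\<Sum>i\<in>A. real (X i \<omega>))}
      \<le> ennreal (exp (- t * a)) * (\<integral>\<^sup>+\<omega>. ennreal (exp (t * (\<Sum>i\<in>A. real (X i \<omega>)))) * indicator (space M) \<omega> \<partial>M)"
    using \<open>t > 0\<close> \<open>A \<subseteq> I\<close> by (intro Chernoff_ineq_nn_integral_ge) auto
  also have "(\<integral>\<^sup>+\<omega>. ennreal (exp (t * (\<Sum>i\<in>A. real (X i \<omega>)))) * indicator (space M) \<omega> \<partial>M)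
      = (\<integral>\<^sup>+\<omega>. (\<Prod>i\<in>A. ennreal (exp (t * real (X i \<omega>)))) \<partial>M)"
    using \<open>finite A\<close> by (intro nn_integral_cong) (simp add: sum_distrib_left exp_sum prod_ennreal)
  also have "\<dots> = (\<Prod>i\<in>A. \<integral>\<^sup>+\<omega>. ennreal (exp (t * real (X i \<omega>))) \<partial>M)"
    using \<open>finite A\<close> \<open>A \<subseteq> I\<close>
    by (intro indep_vars_nn_integral indep_vars_compose2[OF indep_vars_subset[OF indep]]) auto
  also have "\<dots> = ennreal (exp (lam * (exp t - 1)) ^ card A)"
    using \<open>A \<subseteq> I\<close> moment by (simp add: subset_iff ennreal_power)
  finally have "emeasure M {\<omega> \<in> space M. a \<le> (\<Sum>i\<in>A. real (X i \<omega>))}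
      \<le> ennreal (exp (- t * a) * exp (lam * (exp t - 1)) ^ card A)"
    by (simp add: ennreal_mult')
  also have "exp (- t * a) * exp (lam * (exp t - 1)) ^ card A = exp (card A * lam * (exp t - 1) - t * a)"
    by (simp add: exp_of_nat_mult[symmetric] exp_add[symmetric] algebra_simps)
  finally show ?thesis
    by (simp add: emeasure_eq_measure)
qed

lemma greedy_animal_gt_iff:
  assumes "1 \<le> n"
  shows "c < greedy_animal X n \<longleftrightarrow> (\<exists>A\<in>lattice_animals n. c < (\<Sum>k\<in>A. X k))"
  using finite_lattice_animals lattice_animals_nonempty[OF assms]
  by (simp add: greedy_animal_def Max_gr_iff)

lemma (in prob_space) greedy_animal_tail_poisson:
  fixes X :: "int \<times> int \<Rightarrow> 'a \<Rightarrow> nat" and lam t c :: real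
  assumes indep: "indep_vars (\<lambda>_. count_space UNIV) X UNIV"
    and poisson: "\<And>j. distr M (count_space UNIV) (X j) = measure_pmf (poisson_pmf lam)"
    and "lam > 0" "t > 0" "1 \<le> n"
  shows "{\<omega> \<in> space M. c < greedy_animal (\<lambda>k. real (X k \<omega>)) n} \<in> events"
    and "prob {\<omega> \<in> space M. c < greedy_animal (\<lambda>k. real (X k \<omega>)) n}
           \<le> 16 ^ (n - 1) * exp (n * lam * (exp t - 1) - t * c)"
proof -
  have [measurable]: "X k \<in> measurable M (count_space UNIV)" for k
    using indep by (cases k) (simp add: indep_vars_def)
  define E where "E A = {\<omega> \<in> space M. c < (\<Sum>k\<in>A. real (X k \<omega>))}" for A
  have E_events: "E A \<in> events" for A
    unfolding E_def by measurable
  have event_eq: "{\<omega> \<in> space M. c < greedy_animal (\<lambda>k. real (X k \<omega>)) n} = (\<Union>A\<in>lattice_animals n. E A)"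
    using greedy_animal_gt_iff[OF \<open>1 \<le> n\<close>] by (auto simp: E_def)
  then show "{\<omega> \<in> space M. c < greedy_animal (\<lambda>k. real (X k \<omega>)) n} \<in> events"
    using finite_lattice_animals E_events by auto
  have E_bound: "prob (E A) \<le> exp (n * lam * (exp t - 1) - t * c)" if "A \<in> lattice_animals n" for A
  proof -
    have "finite A" "card A = n"
      using that by (auto simp: lattice_animals_def)
    have "prob (E A) \<le> prob {\<omega> \<in> space M. c \<le> (\<Sum>k\<in>A. real (X k \<omega>))}"
      unfolding E_def by (intro finite_measure_mono) auto
    also have "\<dots> \<le> exp (n * lam * (exp t - 1) - t * c)"
      using Chernoff_sum_indep_poisson[OF indep poisson \<open>lam > 0\<close> \<open>t > 0\<close> \<open>finite A\<close>] \<open>card A = n\<close>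
      by simp
    finally show ?thesis .
  qed
  have "prob (\<Union>A\<in>lattice_animals n. E A) \<le> (\<Sum>A\<in>lattice_animals n. prob (E A))"
    using finite_lattice_animals E_events by (intro finite_measure_subadditive_finite) auto
  also have "\<dots> \<le> card (lattice_animals n) * exp (n * lam * (exp t - 1) - t * c)"
    using sum_mono[OF E_bound] by simp
  also have "\<dots> \<le> 16 ^ (n - 1) * exp (n * lam * (exp t - 1) - t * c)"
    using card_lattice_animals_le[of n] by (intro mult_right_mono) (simp_all flip: of_nat_power)
  finally show "prob {\<omega> \<in> space M. c < greedy_animal (\<lambda>k. real (X k \<omega>)) n}
      \<le> 16 ^ (n - 1) * exp (n * lam * (exp t - 1) - t * c)"
    unfolding event_eq .
qed

lemma tilt_three_bound_le_exp:
  fixes lam y :: real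
  assumes "lam \<ge> 0" "exp 3 * lam \<le> y" "4 \<le> y"
  shows "16 ^ (n - 1) * exp (n * lam * (exp 3 - 1) - 3 * (y * n)) \<le> exp (- y * n)"
proof -
  have "(16::real) = 2 ^ 4" by simp
  also have "\<dots> \<le> exp 1 ^ 4"
    using exp_ge_add_one_self[of 1] by (intro power_mono) auto
  finally have "(16::real) ^ (n - 1) \<le> exp 4 ^ n"
    by (intro order_trans[OF power_increasing[of "n - 1" n] power_mono]) (auto simp flip: exp_of_nat_mult)
  then have "16 ^ (n - 1) * exp (n * lam * (exp 3 - 1) - 3 * (y * n))
      \<le> exp (4 * n + (n * lam * (exp 3 - 1) - 3 * (y * n)))"
    by (simp add: exp_add exp_of_nat_mult[symmetric] mult.commute)
  also have "\<dots> \<le> exp (- y * n)"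
    using mult_left_mono[OF \<open>4 \<le> y\<close>, of n] mult_left_mono[OF \<open>exp 3 * lam \<le> y\<close>, of n]
      mult_nonneg_nonneg[OF of_nat_0_le_iff \<open>lam \<ge> 0\<close>, of n]
    by (simp add: algebra_simps)
  finally show ?thesis .
qed

theorem lemma3p1:
  shows "\<exists>\<rho>::real. \<rho> > 0 \<and>
    (\<forall>(lam::real) (M::'a measure) (X :: int \<times> int \<Rightarrow> 'a \<Rightarrow> nat).
       lam > 0 \<longrightarrow> prob_space M \<longrightarrow>
       prob_space.indep_vars M (\<lambda>_. count_space UNIV) X UNIV \<longrightarrow>
       (\<forall>j. distr M (count_space UNIV) (X j) = measure_pmf (poisson_pmf lam)) \<longrightarrow>
       (\<forall>y n. y \<ge> max (exp 3 * lam) \<rho> \<longrightarrow> n \<ge> 1 \<longrightarrow>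
          {\<omega> \<in> space M. greedy_animal (\<lambda>k. real (X k \<omega>)) n > y * real n} \<in> sets M \<and>
          measure M {\<omega> \<in> space M. greedy_animal (\<lambda>k. real (X k \<omega>)) n > y * real n}
            \<le> exp (- y * real n)))"
proof (intro exI[of _ 4] conjI allI impI)
  fix lam :: real and M :: "'a measure" and X :: "int \<times> int \<Rightarrow> 'a \<Rightarrow> nat" and y :: real and n :: nat
  assume lam: "lam > 0" and "prob_space M"
    and indep: "prob_space.indep_vars M (\<lambda>_. count_space UNIV) X UNIV"
    and poisson: "\<forall>j. distr M (count_space UNIV) (X j) = measure_pmf (poisson_pmf lam)"
    and y: "max (exp 3 * lam) 4 \<le> y" and n: "1 \<le> n"
  interpret prob_space M by fact
  note tail = greedy_animal_tail_poisson[OF indep poisson[rule_format] lam _ n, of 3 "y * n"]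
  show "{\<omega> \<in> space M. greedy_animal (\<lambda>k. real (X k \<omega>)) n > y * real n} \<in> sets M"
    using tail(1) by simp
  have "prob {\<omega> \<in> space M. greedy_animal (\<lambda>k. real (X k \<omega>)) n > y * real n}
      \<le> 16 ^ (n - 1) * exp (n * lam * (exp 3 - 1) - 3 * (y * n))"
    using tail(2) by simp
  also have "\<dots> \<le> exp (- y * n)"
    using lam y by (intro tilt_three_bound_le_exp) auto
  finally show "prob {\<omega> \<in> space M. greedy_animal (\<lambda>k. real (X k \<omega>)) n > y * real n} \<le> exp (- y * real n)" .
qed simp

end
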